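(* Let $p\ge 1$ and $q\ge 2$ be integers with $q-1\le p\le \frac12 q(q-1)$. Then there is a Zariski open, dense subset $\mathcal{O}$ of $\mathcal{V}(p,q)=\Lambda^2(\mathbb{R}^q)^*\otimes\mathbb{R}^p$ such that for every $\rho\in\mathcal{O}\cap V^o_{p,q}$, the simply connected 2-step nilpotent Lie group $N_\rho$ satisfies the partial automatic continuity. Moreover, for every $\rho\in\mathcal{O}\cap V^o_{p,q}$ and every abstract (not necessarily continuous) group automorphism $F$ of $N_\rho$, there exist a central automorphism $\mu$ of $N_\rho$ and a Lie group automorphism $\overline{F}$ of $N_\rho$ such that $F=\mu\circ\overline{F}$.
   Context: Every $\rho\in\mathcal{V}(p,q)=\Lambda^2(\mathbb{R}^q)^*\otimes\mathbb{R}^p$ (a linear map $\Lambda^2\mathbb{R}^q\to\mathbb{R}^p$) defines a Lie bracket $[\cdot,\cdot]_\rho$ on $\mathbb{R}^q\oplus\mathbb{R}^p$ by $[x,y]_\rho=\rho(x\wedge y)$ for $x,y\in\mathbb{R}^q$ and all brackets involving $\mathbb{R}^p$ equal to $0$; write $\mathcal{N}_\rho=(\mathbb{R}^q\oplus\mathbb{R}^p,[\cdot,\cdot]_\rho)$. Let $V^o_{p,q}\subseteq\mathcal{V}(p,q)$ be the (Zariski open, dense) set of surjective $\rho$, i.e. those for which $\mathcal{N}_\rho$ is 2-step nilpotent with $[\mathcal{N}_\rho,\mathcal{N}_\rho]=\mathbb{R}^p$ of dimension $p$ ("type $(p,q)$"). $N_\rho$ denotes the simply connected Lie group with Lie algebra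 $\mathcal{N}_\rho$. For a simply connected nilpotent Lie group $N$ with Lie algebra $\mathcal{N}$ (so $\exp:\mathcal{N}\to N$ is a diffeomorphism): a central automorphism of $N$ is an abstract group automorphism $F$ with $x^{-1}F(x)$ in the center of $N$ for all $x$; a Lie group automorphism is a continuous (hence smooth) automorphism. Field automorphisms: if $\mathcal{N}=\mathcal{N}_1\oplus\cdots\oplus\mathcal{N}_k$ is a direct sum of ideals, for each $\mathcal{N}_i$ that is the realification of a complex Lie algebra choose a $\mathbb{C}$-basis $e_1,\dots,e_m$ of $\mathcal{N}_i$ and a field automorphism $\varphi$ of $\mathbb{C}$ fixing the structure constants in this basis and set $\sigma_i(\sum x_le_l)=\sum\varphi(x_l)e_l$; otherwise $\sigma_i=\mathrm{id}$. Then $\sigma=\sigma_1\times\cdots\times\sigma_k$ is a field automorphism of $\mathcal{N}$ and $\exp\circ\sigma\circ\exp^{-1}$ is a field automorphism of $N$ (if $\mathcal{N}$ is not such a realification in any way, only the identity arises). $N$ satisfies the partial automatic continuity if every abstract group automorphism $F$ of $N$ can be written $F=\mu\circ\overline{F}\circ\Phi$ with $\mu$ a central automorphism, $\overline{F}$ a Lie group automorphism and $\Phi$ a field automorphism of $N$. *)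

theory Defs
  imports "HOL-Analysis.Analysis"
begin

text \<open>An element rho of V(p,q) is encoded by its coordinates rho i j k, i.e. the
 k-th component of rho(e_i wedge e_j); the space V(p,q) consists of the alternating ones.
 The dimensions are q = CARD('q) and p = CARD('p).\<close>

definition Vpq :: "('q \<Rightarrow> 'q \<Rightarrow> 'p \<Rightarrow> real) set" where
  "Vpq = {\<rho>. \<forall>i j k. \<rho> i j k = - \<rho> j i k}"

inductive poly_in :: "('x \<Rightarrow> real) set \<Rightarrow> ('x \<Rightarrow> real) \<Rightarrow> bool" for C where
  coord: "c \<in> C \<Longrightarrow> poly_in C c"
| const: "poly_in C (\<lambda>_. a)"
| add: "poly_in C f \<Longrightarrow> poly_in C g \<Longrightarrow> poly_in C (\<lambda>x. f x + g x)"
| mult: "poly_in C f \<Longrightarrow> poly_in C g \<Longrightarrow> poly_in C (\<lambda>x. f x * g x)"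

definition V_coords :: "(('q \<Rightarrow> 'q \<Rightarrow> 'p \<Rightarrow> real) \<Rightarrow> real) set" where
  "V_coords = {(\<lambda>\<rho>. \<rho> i j k) | i j k. True}"

definition V_poly :: "(('q \<Rightarrow> 'q \<Rightarrow> 'p \<Rightarrow> real) \<Rightarrow> real) \<Rightarrow> bool" where
  "V_poly f \<longleftrightarrow> poly_in V_coords f"

definition zariski_open_V :: "('q \<Rightarrow> 'q \<Rightarrow> 'p \<Rightarrow> real) set \<Rightarrow> bool" where
  "zariski_open_V Ob \<longleftrightarrow>
     (\<exists>S. (\<forall>f\<in>S. V_poly f) \<and> Ob = {\<rho>\<in>Vpq. \<exists>f\<in>S. f \<rho> \<noteq> 0})"

definition zariski_dense_V :: "('q \<Rightarrow> 'q \<Rightarrow> 'p \<Rightarrow> real) set \<Rightarrow> bool" where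
  "zariski_dense_V Ob \<longleftrightarrow> Ob \<subseteq> Vpq \<and>
     (\<forall>f. V_poly f \<and> (\<forall>\<rho>\<in>Ob. f \<rho> = 0) \<longrightarrow> (\<forall>\<rho>\<in>Vpq. f \<rho> = 0))"

definition brk :: "('q::finite \<Rightarrow> 'q \<Rightarrow> 'p::finite \<Rightarrow> real) \<Rightarrow> real^'q \<Rightarrow> real^'q \<Rightarrow> real^'p" where
  "brk \<rho> x y = (\<chi> k. \<Sum>i\<in>UNIV. \<Sum>j\<in>UNIV. x$i * y$j * \<rho> i j k)"

text \<open>Surjective rho: the image of the linear map Lambda^2 R^q -> R^p, i.e. the span of all
 rho(x wedge y), is all of R^p.\<close>
definition Vo :: "('q::finite \<Rightarrow> 'q \<Rightarrow> 'p::finite \<Rightarrow> real) set" where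
  "Vo = {\<rho>\<in>Vpq. span (range (\<lambda>(x,y). brk \<rho> x y)) = UNIV}"

definition lie_br :: "('q::finite \<Rightarrow> 'q \<Rightarrow> 'p::finite \<Rightarrow> real) \<Rightarrow>
   ((real^'q) \<times> (real^'p)) \<Rightarrow> ((real^'q) \<times> (real^'p)) \<Rightarrow> ((real^'q) \<times> (real^'p))" where
  "lie_br \<rho> u v = (0, brk \<rho> (fst u) (fst v))"

text \<open>The simply connected group N_rho, realised on the Lie algebra via exp (exponential
 coordinates), with the Baker-Campbell-Hausdorff product X*Y = X + Y + 1/2[X,Y];
 in these coordinates exp is the identity map.\<close>
definition nmul :: "('q::finite \<Rightarrow> 'q \<Rightarrow> 'p::finite \<Rightarrow> real) \<Rightarrow>
   ((real^'q) \<times> (real^'p)) \<Rightarrow> ((real^'q) \<times> (real^'p)) \<Rightarrow> ((real^'q) \<times> (real^'p))" where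
  "nmul \<rho> u v = u + v + (1/2) *\<^sub>R lie_br \<rho> u v"

definition ninv :: "((real^'q) \<times> (real^'p)) \<Rightarrow> ((real^'q) \<times> (real^'p))" where
  "ninv u = - u"

definition ncenter :: "('q::finite \<Rightarrow> 'q \<Rightarrow> 'p::finite \<Rightarrow> real) \<Rightarrow> ((real^'q) \<times> (real^'p)) set" where
  "ncenter \<rho> = {c. \<forall>g. nmul \<rho> c g = nmul \<rho> g c}"

definition group_aut :: "('q::finite \<Rightarrow> 'q \<Rightarrow> 'p::finite \<Rightarrow> real) \<Rightarrow>
   (((real^'q) \<times> (real^'p)) \<Rightarrow> ((real^'q) \<times> (real^'p))) \<Rightarrow> bool" where
  "group_aut \<rho> F \<longleftrightarrow> bij F \<and> (\<forall>a b. F (nmul \<rho> a b) = nmul \<rho> (F a) (F b))"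

definition central_aut :: "('q::finite \<Rightarrow> 'q \<Rightarrow> 'p::finite \<Rightarrow> real) \<Rightarrow>
   (((real^'q) \<times> (real^'p)) \<Rightarrow> ((real^'q) \<times> (real^'p))) \<Rightarrow> bool" where
  "central_aut \<rho> F \<longleftrightarrow> group_aut \<rho> F \<and> (\<forall>x. nmul \<rho> (ninv x) (F x) \<in> ncenter \<rho>)"

definition lie_group_aut :: "('q::finite \<Rightarrow> 'q \<Rightarrow> 'p::finite \<Rightarrow> real) \<Rightarrow>
   (((real^'q) \<times> (real^'p)) \<Rightarrow> ((real^'q) \<times> (real^'p))) \<Rightarrow> bool" where
  "lie_group_aut \<rho> F \<longleftrightarrow> group_aut \<rho> F \<and> continuous_on UNIV F"

definition field_aut_C :: "(complex \<Rightarrow> complex) \<Rightarrow> bool" where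
  "field_aut_C \<phi> \<longleftrightarrow> bij \<phi> \<and> (\<forall>a b. \<phi> (a + b) = \<phi> a + \<phi> b) \<and> (\<forall>a b. \<phi> (a * b) = \<phi> a * \<phi> b)"

definition cscal :: "('n \<Rightarrow> 'n) \<Rightarrow> complex \<Rightarrow> 'n \<Rightarrow> 'n::real_vector" where
  "cscal J c u = Re c *\<^sub>R u + Im c *\<^sub>R J u"

definition ccomb :: "('n \<Rightarrow> 'n) \<Rightarrow> 'n list \<Rightarrow> (nat \<Rightarrow> complex) \<Rightarrow> 'n::real_vector" where
  "ccomb J es cs = (\<Sum>l<length es. cscal J (cs l) (es ! l))"

definition fin_supp :: "nat \<Rightarrow> (nat \<Rightarrow> complex) \<Rightarrow> bool" where
  "fin_supp m cs \<longleftrightarrow> (\<forall>l\<ge>m. cs l = 0)"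

text \<open>s is a field automorphism of the ideal U, where U (with bracket br) is the
 realification of a complex Lie algebra (complex structure J), es is a C-basis of U,
 phi a field automorphism of C fixing the structure constants in this basis, and
 s(sum c_l e_l) = sum phi(c_l) e_l.\<close>
definition complex_field_map :: "('n::real_vector \<Rightarrow> 'n \<Rightarrow> 'n) \<Rightarrow> 'n set \<Rightarrow> ('n \<Rightarrow> 'n) \<Rightarrow> bool" where
  "complex_field_map br U s \<longleftrightarrow>
    (\<exists>J es \<phi>. linear J \<and> (\<forall>u\<in>U. J u \<in> U) \<and> (\<forall>u\<in>U. J (J u) = - u)
       \<and> (\<forall>u\<in>U. \<forall>v\<in>U. br (J u) v = J (br u v))
       \<and> set es \<subseteq> U
       \<and> (\<forall>u\<in>U. \<exists>!cs. fin_supp (length es) cs \<and> ccomb J es cs = u)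
       \<and> field_aut_C \<phi>
       \<and> (\<forall>a<length es. \<forall>b<length es. \<forall>cs. fin_supp (length es) cs \<and>
              ccomb J es cs = br (es ! a) (es ! b) \<longrightarrow> (\<forall>l. \<phi> (cs l) = cs l))
       \<and> (\<forall>cs. fin_supp (length es) cs \<longrightarrow> s (ccomb J es cs) = ccomb J es (\<phi> \<circ> cs)))"

definition lie_ideal :: "('n::real_vector \<Rightarrow> 'n \<Rightarrow> 'n) \<Rightarrow> 'n set \<Rightarrow> bool" where
  "lie_ideal br U \<longleftrightarrow> subspace U \<and> (\<forall>x. \<forall>u\<in>U. br x u \<in> U)"

text \<open>Field automorphisms of a Lie algebra (vector space 'n with bracket br):
 given a direct sum decomposition into ideals U_0, ..., U_(k-1), on each summand either
 the identity or a complex field map as above.\<close>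
definition field_aut_alg :: "('n::real_vector \<Rightarrow> 'n \<Rightarrow> 'n) \<Rightarrow> ('n \<Rightarrow> 'n) \<Rightarrow> bool" where
  "field_aut_alg br \<sigma> \<longleftrightarrow>
    (\<exists>(k::nat) Us ss. (\<forall>i<k. lie_ideal br (Us i))
       \<and> (\<forall>v. \<exists>!us. (\<forall>i<k. us i \<in> Us i) \<and> (\<forall>i\<ge>k. us i = 0) \<and> (\<Sum>i<k. us i) = v)
       \<and> (\<forall>i<k. (\<forall>u\<in>Us i. ss i u = u) \<or> complex_field_map br (Us i) (ss i))
       \<and> (\<forall>us. (\<forall>i<k. us i \<in> Us i) \<longrightarrow> \<sigma> (\<Sum>i<k. us i) = (\<Sum>i<k. ss i (us i))))"

text \<open>Field automorphisms of N_rho: exp o sigma o exp^-1, which in exponential coordinates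
 is sigma itself.\<close>
definition group_field_aut :: "('q::finite \<Rightarrow> 'q \<Rightarrow> 'p::finite \<Rightarrow> real) \<Rightarrow>
   (((real^'q) \<times> (real^'p)) \<Rightarrow> ((real^'q) \<times> (real^'p))) \<Rightarrow> bool" where
  "group_field_aut \<rho> \<Phi> \<longleftrightarrow> field_aut_alg (lie_br \<rho>) \<Phi>"

definition partial_automatic_continuity :: "('q::finite \<Rightarrow> 'q \<Rightarrow> 'p::finite \<Rightarrow> real) \<Rightarrow> bool" where
  "partial_automatic_continuity \<rho> \<longleftrightarrow>
    (\<forall>F. group_aut \<rho> F \<longrightarrow>
      (\<exists>\<mu> Fb \<Phi>. central_aut \<rho> \<mu> \<and> lie_group_aut \<rho> Fb \<and> group_field_aut \<rho> \<Phi>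
                \<and> F = \<mu> \<circ> Fb \<circ> \<Phi>))"

end

theory Submission
  imports Defs "HOL-Computational_Algebra.Polynomial"
begin

(* Call a linear map T of R^q rho-symmetric if [u, T v] = [T u, v]. The set O is the
   non-vanishing locus of a Gram determinant which is nonzero exactly when every rho-symmetric
   map is a scalar; an explicit rho with this property exists as soon as q - 1 <= p, and a
   polynomial that is not identically zero on the vector space V(p,q) has a Zariski dense
   non-vanishing locus.

   For such rho (and q >= 2) the bracket is nondegenerate, so the center of N_rho is exactly
   R^p. An abstract automorphism F therefore has the form F(x,z) = (A x, C x + B z) with
   A, B, C additive, A bijective and [A x, A y] = B [x,y]. For every real t the map
   u -> A (t A^-1 u) is additive and rho-symmetric, hence equal to c(t) u; then c is a ring
   endomorphism of R, i.e. the identity, so A is linear, and B is linear on the span of the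
   brackets, which is R^p. Thus F is the Lie group automorphism (A, B) followed by the central
   automorphism (x,z) -> (x, z + C (A^-1 x)); no field automorphism other than the identity
   is needed. *)

section \<open>Polynomial functions\<close>

lemma poly_in_sum:
  "finite I \<Longrightarrow> (\<And>i. i \<in> I \<Longrightarrow> poly_in C (f i)) \<Longrightarrow> poly_in C (\<lambda>x. \<Sum>i\<in>I. f i x)"
proof (induction I rule: finite_induct)
  case empty
  then show ?case using poly_in.const[of C 0] by simp
next
  case (insert a I)
  then show ?case using poly_in.add[of C "f a" "\<lambda>x. \<Sum>i\<in>I. f i x"] by simp
qed

lemma poly_in_prod:
  "finite I \<Longrightarrow> (\<And>i. i \<in> I \<Longrightarrow> poly_in C (f i)) \<Longrightarrow> poly_in C (\<lambda>x. \<Prod>i\<in>I. f i x)"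
proof (induction I rule: finite_induct)
  case empty
  then show ?case using poly_in.const[of C 1] by simp
next
  case (insert a I)
  then show ?case using poly_in.mult[of C "f a" "\<lambda>x. \<Prod>i\<in>I. f i x"] by simp
qed

lemma poly_in_diff: "poly_in C f \<Longrightarrow> poly_in C g \<Longrightarrow> poly_in C (\<lambda>x. f x - g x)"
  using poly_in.add[of C f "\<lambda>x. (-1) * g x"] poly_in.mult[OF poly_in.const, of C g "-1"] by simp

lemma poly_in_if: "poly_in C f \<Longrightarrow> poly_in C (\<lambda>x. if P then f x else 0)"
  by (cases P) (simp_all add: poly_in.const)

lemma poly_in_matrix_mult:
  fixes M :: "'x \<Rightarrow> real^'n::finite^'m" and N :: "'x \<Rightarrow> real^'k^'n"
  assumes "\<And>i j. poly_in C (\<lambda>x. M x $ i $ j)" and "\<And>i j. poly_in C (\<lambda>x. N x $ i $ j)"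
  shows "poly_in C (\<lambda>x. (M x ** N x) $ i $ j)"
  unfolding matrix_matrix_mult_def vec_lambda_beta
  by (intro poly_in_sum poly_in.mult assms) simp

lemma poly_in_det:
  fixes M :: "'x \<Rightarrow> real^'n::finite^'n"
  assumes "\<And>i j. poly_in C (\<lambda>x. M x $ i $ j)"
  shows "poly_in C (\<lambda>x. det (M x))"
  unfolding det_def
  by (intro poly_in_sum poly_in.mult poly_in.const poly_in_prod assms)
    (simp_all add: finite_permutations)

lemma poly_in_along_line:
  assumes "poly_in C f" and "\<And>c. c \<in> C \<Longrightarrow> \<exists>a b. \<forall>t. c (l t) = a + b * t"
  shows "\<exists>P. \<forall>t. f (l t) = poly P t"
  using assms(1)
proof (induction rule: poly_in.induct)
  case (coord c)
  then obtain a b where "\<forall>t. c (l t) = a + b * t" using assms(2) by blast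
  then show ?case by (intro exI[of _ "[:a, b:]"]) (simp add: mult.commute)
next
  case (const a)
  show ?case by (intro exI[of _ "[:a:]"]) simp
next
  case (add f g)
  then obtain P Q where "\<forall>t. f (l t) = poly P t" "\<forall>t. g (l t) = poly Q t" by blast
  then show ?case by (intro exI[of _ "P + Q"]) simp
next
  case (mult f g)
  then obtain P Q where "\<forall>t. f (l t) = poly P t" "\<forall>t. g (l t) = poly Q t" by blast
  then show ?case by (intro exI[of _ "P * Q"]) simp
qed

lemma V_poly_coord: "V_poly (\<lambda>\<rho>. \<rho> i j k)"
  unfolding V_poly_def by (rule poly_in.coord) (auto simp: V_coords_def)

lemma Vpq_line:
  assumes "\<rho>0 \<in> Vpq" and "\<rho>1 \<in> Vpq"
  shows "(\<lambda>i j k. \<rho>0 i j k + t * (\<rho>1 i j k - \<rho>0 i j k)) \<in> Vpq"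
  unfolding Vpq_def
proof (intro CollectI allI)
  fix i j k
  have "\<rho>0 i j k = - \<rho>0 j i k" "\<rho>1 i j k = - \<rho>1 j i k" using assms unfolding Vpq_def by blast+
  then show "\<rho>0 i j k + t * (\<rho>1 i j k - \<rho>0 i j k) = - (\<rho>0 j i k + t * (\<rho>1 j i k - \<rho>0 j i k))"
    by (simp add: algebra_simps)
qed

lemma zariski_open_V_nonvanishing: "V_poly g \<Longrightarrow> zariski_open_V {\<rho>\<in>Vpq. g \<rho> \<noteq> 0}"
  unfolding zariski_open_V_def by (intro exI[of _ "{g}"]) auto

lemma zariski_dense_V_nonvanishing:
  fixes \<rho>0 :: "'q \<Rightarrow> 'q \<Rightarrow> 'p \<Rightarrow> real"
  assumes g: "V_poly g" and \<rho>0: "\<rho>0 \<in> Vpq" "g \<rho>0 \<noteq> 0"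
  shows "zariski_dense_V {\<rho>\<in>Vpq. g \<rho> \<noteq> 0}"
  unfolding zariski_dense_V_def
proof (intro conjI allI impI ballI)
  fix f and \<rho> :: "'q \<Rightarrow> 'q \<Rightarrow> 'p \<Rightarrow> real"
  assume f: "V_poly f \<and> (\<forall>\<rho>\<in>{\<rho>\<in>Vpq. g \<rho> \<noteq> 0}. f \<rho> = 0)" and \<rho>: "\<rho> \<in> Vpq"
  define l where "l t = (\<lambda>i j k. \<rho>0 i j k + t * (\<rho> i j k - \<rho>0 i j k))" for t :: real
  have affine: "\<exists>a b. \<forall>t. c (l t) = a + b * t" if c: "c \<in> V_coords" for c
  proof -
    obtain i j k where "c = (\<lambda>\<rho>. \<rho> i j k)" using c unfolding V_coords_def by blast
    then show ?thesis unfolding l_def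
      by (intro exI[of _ "\<rho>0 i j k"] exI[of _ "\<rho> i j k - \<rho>0 i j k"]) (simp add: mult.commute)
  qed
  obtain P where P: "\<And>t. g (l t) = poly P t"
    using poly_in_along_line[of V_coords g l] g affine unfolding V_poly_def by blast
  obtain Q where Q: "\<And>t. f (l t) = poly Q t"
    using poly_in_along_line[of V_coords f l] f affine unfolding V_poly_def by blast
  have "P \<noteq> 0" using P[of 0] \<rho>0 by (auto simp: l_def)
  then have "finite {t. poly P t = 0}" by (rule poly_roots_finite)
  then have "infinite (- {t. poly P t = 0})"
    by (simp add: Compl_eq_Diff_UNIV Diff_infinite_finite infinite_UNIV_char_0)
  moreover have "- {t. poly P t = 0} \<subseteq> {t. poly Q t = 0}"
  proof
    fix t assume "t \<in> - {t. poly P t = 0}"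
    then have "l t \<in> {\<rho>\<in>Vpq. g \<rho> \<noteq> 0}" using P Vpq_line[OF \<rho>0(1) \<rho>] by (simp add: l_def)
    then show "t \<in> {t. poly Q t = 0}" using f Q[of t] by auto
  qed
  ultimately have "Q = 0" using poly_roots_finite finite_subset by blast
  then show "f \<rho> = 0" using Q[of 1] by (simp add: l_def)
qed simp

lemma bilinear_brk: "bilinear (brk \<rho>)"
  unfolding bilinear_def brk_def
  by (auto intro!: linearI simp: vec_eq_iff algebra_simps sum.distrib sum_distrib_left)

lemma brk_zero [simp]: "brk \<rho> 0 y = 0" "brk \<rho> x 0 = 0"
  by (simp_all add: bilinear_lzero[OF bilinear_brk] bilinear_rzero[OF bilinear_brk])

lemma brk_antisym:
  assumes "\<rho> \<in> Vpq"
  shows "brk \<rho> x y = - brk \<rho> y x"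
proof -
  have \<rho>: "\<rho> i j k = - \<rho> j i k" for i j k using assms unfolding Vpq_def by blast
  have "(\<Sum>i\<in>UNIV. \<Sum>j\<in>UNIV. x$i * y$j * \<rho> i j k) = - (\<Sum>j\<in>UNIV. \<Sum>i\<in>UNIV. y$j * x$i * \<rho> j i k)" for k
    by (subst \<rho>, subst sum.swap) (simp add: sum_negf ac_simps)
  then show ?thesis unfolding brk_def by (simp add: vec_eq_iff)
qed

lemma brk_axis_left: "brk \<rho> (axis a 1) y $ k = (\<Sum>j\<in>UNIV. y$j * \<rho> a j k)"
  unfolding brk_def axis_def vec_lambda_beta
  by (subst sum.swap) (simp add: if_distrib[of "\<lambda>c. _ * c"] if_distrib[of "\<lambda>c. c * _"] cong: if_cong)

lemma brk_axis_right: "brk \<rho> x (axis b 1) $ k = (\<Sum>i\<in>UNIV. x$i * \<rho> i b k)"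
  unfolding brk_def axis_def
  by (simp add: if_distrib[of "\<lambda>c. _ * c"] if_distrib[of "\<lambda>c. c * _"] cong: if_cong)

section \<open>Maps that are symmetric for the bracket\<close>

(* t is the matrix of a linear map T of R^q, t i j being the i-th coordinate of T e_j; the
   condition says [e_a, T e_b] = [T e_a, e_b]. *)
definition rho_symmetric ::
    "('q::finite \<Rightarrow> 'q \<Rightarrow> 'p::finite \<Rightarrow> real) \<Rightarrow> ('q \<Rightarrow> 'q \<Rightarrow> real) \<Rightarrow> bool"
  where "rho_symmetric \<rho> t \<longleftrightarrow>
    (\<forall>a b k. (\<Sum>j\<in>UNIV. t j b * \<rho> a j k) = (\<Sum>i\<in>UNIV. t i a * \<rho> i b k))"

definition only_scalar_symmetric :: "('q::finite \<Rightarrow> 'q \<Rightarrow> 'p::finite \<Rightarrow> real) \<Rightarrow> bool"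
  where "only_scalar_symmetric \<rho> \<longleftrightarrow>
    (\<forall>t. rho_symmetric \<rho> t \<longrightarrow> (\<exists>c. \<forall>i j. t i j = (if i = j then c else 0)))"

lemma symmetric_linear_map_scalar:
  fixes \<rho> :: "'q::finite \<Rightarrow> 'q \<Rightarrow> 'p::finite \<Rightarrow> real"
  assumes \<rho>: "only_scalar_symmetric \<rho>" and L: "linear L"
    and sym: "\<And>u v. brk \<rho> u (L v) = brk \<rho> (L u) v"
  shows "\<exists>c. \<forall>v. L v = c *\<^sub>R v"
proof -
  define t where "t j b = L (axis b 1) $ j" for j b
  have "rho_symmetric \<rho> t"
    unfolding rho_symmetric_def t_def
    using sym[of "axis _ 1" "axis _ 1"] by (simp add: brk_axis_left brk_axis_right vec_eq_iff)
  then obtain c where c: "\<And>i j. t i j = (if i = j then c else 0)"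
    using \<rho> unfolding only_scalar_symmetric_def by blast
  have "L = (\<lambda>v. c *\<^sub>R v)"
  proof (rule linear_eq_stdbasis[OF L])
    fix b :: "real^'q" assume "b \<in> Basis"
    then obtain i where b: "b = axis i 1" unfolding Basis_vec_def by auto
    have "L (axis i 1) $ j = (if j = i then c else 0)" for j using c[of j i] by (simp add: t_def)
    then show "L b = c *\<^sub>R b" by (simp add: b vec_eq_iff axis_def)
  qed (simp add: linear_scaleR)
  then show ?thesis by auto
qed

lemma brk_nondegenerate:
  fixes \<rho> :: "'q::finite \<Rightarrow> 'q \<Rightarrow> 'p::finite \<Rightarrow> real"
  assumes V: "\<rho> \<in> Vpq" and \<rho>: "only_scalar_symmetric \<rho>" and q: "CARD('q) \<ge> 2"
    and x: "\<forall>y. brk \<rho> x y = 0"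
  shows "x = 0"
proof -
  have "\<not> CARD('q) \<le> Suc 0" using q by simp
  then obtain a b :: 'q where "a \<noteq> b" using card_le_Suc0_iff_eq[of "UNIV :: 'q set"] by auto
  \<comment> \<open>v \<mapsto> v$a x is symmetric, but it is a scalar only if x = 0\<close>
  define L where "L v = v $ a *\<^sub>R x" for v :: "real^'q"
  have "linear L" unfolding L_def by (rule linearI) (simp_all add: algebra_simps)
  moreover have "brk \<rho> u (L v) = brk \<rho> (L u) v" for u v
    using x brk_antisym[OF V, of x u]
    by (simp add: L_def bilinear_lmul[OF bilinear_brk] bilinear_rmul[OF bilinear_brk])
  ultimately obtain c where c: "\<And>v. L v = c *\<^sub>R v" using symmetric_linear_map_scalar[OF \<rho>] by blast
  have "c *\<^sub>R axis b 1 = (0 :: real^'q)" using c[of "axis b 1"] \<open>a \<noteq> b\<close> by (simp add: L_def axis_def)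
  then have "c = 0" by (simp add: axis_eq_0_iff)
  then show ?thesis using c[of "axis a 1"] by (simp add: L_def)
qed

lemma additive_symmetric_map_scalar:
  assumes \<rho>: "only_scalar_symmetric \<rho>" and nondeg: "\<And>x. \<forall>y. brk \<rho> x y = 0 \<Longrightarrow> x = 0"
    and L: "Modules.additive L" and sym: "\<And>u v. brk \<rho> u (L v) = brk \<rho> (L u) v"
  shows "\<exists>c. \<forall>v. L v = c *\<^sub>R v"
proof -
  have "L (s *\<^sub>R u) = s *\<^sub>R L u" for s u
  proof -
    have "brk \<rho> (L (s *\<^sub>R u)) v = brk \<rho> (s *\<^sub>R L u) v" for v
      using sym[symmetric] by (simp add: bilinear_lmul[OF bilinear_brk] bilinear_rmul[OF bilinear_brk])
    then show ?thesis using nondeg[of "L (s *\<^sub>R u) - s *\<^sub>R L u"] by (simp add: bilinear_lsub[OF bilinear_brk])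
  qed
  then have "linear L" by (intro linearI) (simp_all add: additive.add[OF L])
  then show ?thesis using symmetric_linear_map_scalar[OF \<rho> _ sym] by blast
qed

section \<open>Additive maps compatible with the bracket are linear\<close>

(* f fixes the rationals and maps squares to squares, hence is monotone. *)
lemma real_ring_endomorphism_id:
  fixes f :: "real \<Rightarrow> real"
  assumes add: "\<And>x y. f (x + y) = f x + f y" and mult: "\<And>x y. f (x * y) = f x * f y"
    and one: "f 1 = 1"
  shows "f x = x"
proof -
  interpret additive f by unfold_locales (rule add)
  have f_nat: "f (of_nat n) = of_nat n" for n by (induction n) (simp_all add: zero add one)
  have f_int: "f (of_int m) = of_int m" for m
    by (cases m rule: int_cases2) (simp_all add: f_nat minus)
  have f_rat: "f r = r" if r: "r \<in> \<rat>" for r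
  proof -
    obtain m n where n: "n > 0" and "r = of_int m / of_int n" using Rats_cases'[OF r] by metis
    then have "of_int n * r = of_int m" by simp
    then have "of_int n * f r = of_int n * r" by (metis f_int mult)
    then show ?thesis using n by simp
  qed
  have mono: "f y \<le> f z" if "y \<le> z" for y z
  proof -
    have "f (z - y) = f (sqrt (z - y)) * f (sqrt (z - y))"
      using mult[symmetric, of "sqrt (z - y)"] that by simp
    then have "f z - f y \<ge> 0" by (simp add: diff)
    then show ?thesis by simp
  qed
  show ?thesis
  proof (rule ccontr)
    assume "f x \<noteq> x"
    then consider "f x < x" | "x < f x" by linarith
    then show False
    proof cases
      case 1
      then obtain r where "r \<in> \<rat>" "f x < r" "r < x" using Rats_dense_in_real by blast
      then show False using mono[of r x] f_rat by fastforce
    next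
      case 2
      then obtain r where "r \<in> \<rat>" "x < r" "r < f x" using Rats_dense_in_real by blast
      then show False using mono[of x r] f_rat by fastforce
    qed
  qed
qed

lemma additive_bracket_compatible_linear:
  fixes \<rho> :: "'q::finite \<Rightarrow> 'q \<Rightarrow> 'p::finite \<Rightarrow> real" and A :: "real^'q \<Rightarrow> real^'q"
  assumes \<rho>: "only_scalar_symmetric \<rho>" and nondeg: "\<And>x. \<forall>y. brk \<rho> x y = 0 \<Longrightarrow> x = 0"
    and A: "Modules.additive A" "bij A" and K: "\<And>x y. brk \<rho> (A x) (A y) = B (brk \<rho> x y)"
  shows "linear A"
proof -
  interpret A: additive A by (rule A(1))
  have A_inv: "A (inv A u) = u" "inv A (A x) = x" for u x
    by (simp_all add: A(2) bij_is_inj bij_is_surj inv_f_f surj_f_inv_f)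
  \<comment> \<open>conjugating multiplication by t with A gives a symmetric map\<close>
  have "\<exists>c. \<forall>x. A (t *\<^sub>R x) = c *\<^sub>R A x" for t
  proof -
    define L where "L u = A (t *\<^sub>R inv A u)" for u
    have "Modules.additive L"
    proof
      fix u v
      have "inv A (u + v) = inv A u + inv A v"
        using A_inv by (metis A.add)
      then show "L (u + v) = L u + L v" by (simp add: L_def scaleR_add_right A.add)
    qed
    moreover have "brk \<rho> u (L v) = brk \<rho> (L u) v" for u v
      using K[of "inv A u" "t *\<^sub>R inv A v"] K[of "t *\<^sub>R inv A u" "inv A v"]
      by (simp add: L_def A_inv bilinear_lmul[OF bilinear_brk] bilinear_rmul[OF bilinear_brk])
    ultimately obtain c where "\<And>v. L v = c *\<^sub>R v" using additive_symmetric_map_scalar[OF \<rho> nondeg] by blast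
    then show ?thesis by (metis L_def A_inv(2))
  qed
  then obtain c where c: "\<And>t x. A (t *\<^sub>R x) = c t *\<^sub>R A x" by metis
  obtain x0 :: "real^'q" where "x0 \<noteq> 0" using axis_eq_0_iff by (metis zero_neq_one)
  then have x0: "A x0 \<noteq> 0" using A.zero A(2) by (metis bij_is_inj injD)
  have "c (s + t) = c s + c t" for s t
  proof -
    have "c (s + t) *\<^sub>R A x0 = (c s + c t) *\<^sub>R A x0"
      using c[of "s + t" x0] c[of s x0] c[of t x0] A.add[of "s *\<^sub>R x0" "t *\<^sub>R x0"]
      by (simp add: scaleR_add_left)
    then show ?thesis using x0 by simp
  qed
  moreover have "c (s * t) = c s * c t" for s t
    using c[of "s * t" x0] c[of s "t *\<^sub>R x0"] c[of t x0] x0 by (simp add: scaleR_cancel_right)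
  moreover have "c 1 = 1" using c[of 1 x0] x0 by (metis scaleR_cancel_right scaleR_one)
  ultimately have "c t = t" for t by (rule real_ring_endomorphism_id)
  then show "linear A" by (intro linearI) (simp_all add: A.add c)
qed

lemma additive_bracket_image_linear:
  fixes \<rho> :: "'q::finite \<Rightarrow> 'q \<Rightarrow> 'p::finite \<Rightarrow> real" and B :: "real^'p \<Rightarrow> real^'p"
  assumes span: "span (range (\<lambda>(x, y). brk \<rho> x y)) = UNIV" and A: "linear A"
    and B: "Modules.additive B" and K: "\<And>x y. brk \<rho> (A x) (A y) = B (brk \<rho> x y)"
  shows "linear B"
proof -
  interpret B: additive B by (rule B)
  have "subspace {v. \<forall>s. B (s *\<^sub>R v) = s *\<^sub>R B v}"
    by (auto simp: subspace_def B.add B.zero scaleR_add_right)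
  moreover have "\<forall>s. B (s *\<^sub>R v) = s *\<^sub>R B v" if "v \<in> range (\<lambda>(x, y). brk \<rho> x y)" for v
    using that
    by (auto simp: bilinear_lmul[OF bilinear_brk, symmetric] K[symmetric] linear_scale[OF A])
  ultimately have "B (s *\<^sub>R v) = s *\<^sub>R B v" for s v
    using span_induct[of v "range (\<lambda>(x, y). brk \<rho> x y)" "\<lambda>v. \<forall>s. B (s *\<^sub>R v) = s *\<^sub>R B v"] span
    by blast
  then show ?thesis by (intro linearI) (simp_all add: B.add)
qed

section \<open>Automorphisms of N_rho\<close>

lemma nmul_pair [simp]: "nmul \<rho> (x, z) (y, w) = (x + y, z + w + (1/2) *\<^sub>R brk \<rho> x y)"
  by (simp add: nmul_def lie_br_def)

lemma fst_zero_in_ncenter: "(0, z) \<in> ncenter \<rho>"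
  by (simp add: ncenter_def)

lemma ncenter_eq_fst_zero:
  assumes V: "\<rho> \<in> Vpq" and "only_scalar_symmetric \<rho>" and "CARD('q::finite) \<ge> 2"
  shows "ncenter (\<rho> :: 'q \<Rightarrow> 'q \<Rightarrow> 'p::finite \<Rightarrow> real) = {c. fst c = 0}"
proof (intro set_eqI iffI)
  fix c assume c: "c \<in> ncenter \<rho>"
  obtain x z where [simp]: "c = (x, z)" by fastforce
  have "brk \<rho> x y = 0" for y
  proof -
    have "nmul \<rho> (x, z) (y, 0) = nmul \<rho> (y, 0) (x, z)" using c unfolding ncenter_def by simp
    then have "brk \<rho> x y = brk \<rho> y x" by simp
    then show ?thesis using brk_antisym[OF V, of y x] by (simp add: vec_eq_iff)
  qed
  then show "c \<in> {c. fst c = 0}" using brk_nondegenerate[OF assms] by simp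
qed (auto simp: fst_zero_in_ncenter)

lemma group_aut_ncenter_iff:
  assumes "group_aut \<rho> F"
  shows "F c \<in> ncenter \<rho> \<longleftrightarrow> c \<in> ncenter \<rho>"
proof -
  have "inj F" "surj F" and hom: "\<And>a b. F (nmul \<rho> a b) = nmul \<rho> (F a) (F b)"
    using assms unfolding group_aut_def by (auto simp: bij_is_inj bij_is_surj)
  have "F c \<in> ncenter \<rho> \<longleftrightarrow> (\<forall>g. nmul \<rho> (F c) (F g) = nmul \<rho> (F g) (F c))"
  proof
    assume h: "\<forall>g. nmul \<rho> (F c) (F g) = nmul \<rho> (F g) (F c)"
    show "F c \<in> ncenter \<rho>" unfolding ncenter_def
    proof (intro CollectI allI)
      fix y
      obtain g where "y = F g" using \<open>surj F\<close> by (metis surjD)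
      then show "nmul \<rho> (F c) y = nmul \<rho> y (F c)" using h by blast
    qed
  qed (unfold ncenter_def, blast)
  also have "\<dots> \<longleftrightarrow> c \<in> ncenter \<rho>"
    unfolding ncenter_def by (simp add: hom[symmetric] inj_eq[OF \<open>inj F\<close>])
  finally show ?thesis .
qed

lemma central_aut_shear:
  assumes E: "Modules.additive E"
  shows "central_aut \<rho> (\<lambda>(x, z). (x, z + E x))"
  unfolding central_aut_def group_aut_def
proof (intro conjI allI)
  show "bij (\<lambda>(x, z). (x, z + E x))"
    by (rule bij_betw_byWitness[where f' = "\<lambda>(x, z). (x, z - E x)"]) auto
  fix a b
  show "(case nmul \<rho> a b of (x, z) \<Rightarrow> (x, z + E x)) =
      nmul \<rho> (case a of (x, z) \<Rightarrow> (x, z + E x)) (case b of (x, z) \<Rightarrow> (x, z + E x))"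
    by (cases a, cases b) (simp add: additive.add[OF E])
next
  fix a
  show "nmul \<rho> (ninv a) (case a of (x, z) \<Rightarrow> (x, z + E x)) \<in> ncenter \<rho>"
    by (cases a) (simp add: ninv_def fst_zero_in_ncenter)
qed

lemma lie_group_aut_map_prod:
  fixes \<rho> :: "'q::finite \<Rightarrow> 'q \<Rightarrow> 'p::finite \<Rightarrow> real"
  assumes A: "linear A" "bij A" and B: "linear B" "bij B"
    and K: "\<And>x y. brk \<rho> (A x) (A y) = B (brk \<rho> x y)"
  shows "lie_group_aut \<rho> (map_prod A B)"
  unfolding lie_group_aut_def group_aut_def
proof (intro conjI allI)
  show "bij (map_prod A B)" using bij_betw_map_prod[OF A(2) B(2)] by simp
  fix a b
  show "map_prod A B (nmul \<rho> a b) = nmul \<rho> (map_prod A B a) (map_prod A B b)"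
    by (cases a, cases b) (simp add: linear_add[OF A(1)] linear_add[OF B(1)] linear_scale[OF B(1)] K)
next
  have "linear (map_prod A B)"
    by (intro linearI) (auto simp: linear_add[OF A(1)] linear_add[OF B(1)]
        linear_scale[OF A(1)] linear_scale[OF B(1)])
  then show "continuous_on UNIV (map_prod A B)"
    by (intro linear_continuous_on) (simp add: linear_conv_bounded_linear[symmetric])
qed

locale nilpotent_aut =
  fixes \<rho> :: "'q::finite \<Rightarrow> 'q \<Rightarrow> 'p::finite \<Rightarrow> real" and F
  assumes alternating: "\<rho> \<in> Vpq"
    and center: "ncenter \<rho> = {c. fst c = 0}"
    and aut: "group_aut \<rho> F"
begin

definition A :: "real^'q \<Rightarrow> real^'q" where "A x = fst (F (x, 0))"
definition B :: "real^'p \<Rightarrow> real^'p" where "B z = snd (F (0, z))"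
definition C :: "real^'q \<Rightarrow> real^'p" where "C x = snd (F (x, 0))"

lemma F_hom: "F (nmul \<rho> a b) = nmul \<rho> (F a) (F b)"
  using aut unfolding group_aut_def by blast

lemma F_inj: "inj F"
  using aut unfolding group_aut_def by (simp add: bij_is_inj)

lemma F_center: "F (0, z) = (0, B z)"
proof -
  have "F (0, z) \<in> ncenter \<rho>" using group_aut_ncenter_iff[OF aut] center by simp
  then show ?thesis using center by (simp add: B_def prod_eq_iff)
qed

lemma additive_B: "Modules.additive B"
proof
  fix z w
  have "F (0, z + w) = nmul \<rho> (F (0, z)) (F (0, w))" using F_hom[of "(0, z)" "(0, w)"] by simp
  then show "B (z + w) = B z + B w" by (simp add: F_center)
qed

interpretation B: additive B by (rule additive_B)

lemma F_pair: "F (x, z) = (A x, C x + B z)"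
proof -
  have "F (x, 0) = (A x, C x)" by (simp add: A_def C_def)
  then show ?thesis using F_hom[of "(x, 0)" "(0, z)"] by (simp add: F_center)
qed

lemma F_horizontal_mult:
  "A (x + y) = A x + A y \<and>
   C (x + y) + (1/2) *\<^sub>R B (brk \<rho> x y) = C x + C y + (1/2) *\<^sub>R brk \<rho> (A x) (A y)"
proof -
  have half: "B ((1/2) *\<^sub>R w) = (1/2) *\<^sub>R B w" for w
    using B.add[of "(1/2) *\<^sub>R w" "(1/2) *\<^sub>R w"] by (simp flip: scaleR_add_left)
  show ?thesis using F_hom[of "(x, 0)" "(y, 0)"] by (simp add: F_pair B.add B.zero half)
qed

lemma additive_A: "Modules.additive A"
  by standard (simp add: F_horizontal_mult)

lemma brk_A: "brk \<rho> (A x) (A y) = B (brk \<rho> x y)"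
proof -
  have "C (x + y) + (1/2) *\<^sub>R B (brk \<rho> x y) = C x + C y + (1/2) *\<^sub>R brk \<rho> (A x) (A y)"
    and "C (x + y) - (1/2) *\<^sub>R B (brk \<rho> x y) = C x + C y - (1/2) *\<^sub>R brk \<rho> (A x) (A y)"
    using F_horizontal_mult[of x y] F_horizontal_mult[of y x]
    by (simp_all add: brk_antisym[OF alternating, of y x] brk_antisym[OF alternating, of "A y" "A x"]
        B.minus add.commute)
  then have "(C (x + y) + (1/2) *\<^sub>R B (brk \<rho> x y)) - (C (x + y) - (1/2) *\<^sub>R B (brk \<rho> x y)) =
      (C x + C y + (1/2) *\<^sub>R brk \<rho> (A x) (A y)) - (C x + C y - (1/2) *\<^sub>R brk \<rho> (A x) (A y))"
    by simp
  then show ?thesis by (simp flip: scaleR_add_left)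
qed

lemma additive_C: "Modules.additive C"
  by standard (use F_horizontal_mult brk_A in simp)

lemma bij_A: "bij A"
proof (rule bijI)
  show "inj A"
  proof (rule injI)
    fix x y assume "A x = A y"
    then have "F (x - y, 0) \<in> ncenter \<rho>"
      using additive.diff[OF additive_A] by (simp add: F_pair center)
    then have "(x - y, 0) \<in> ncenter \<rho>" using group_aut_ncenter_iff[OF aut] by blast
    then show "x = y" using center by simp
  qed
  have "u \<in> range A" for u
  proof -
    have "surj F" using aut unfolding group_aut_def by (simp add: bij_is_surj)
    then obtain x z where "(u, 0) = F (x, z)" using surjD[of F "(u, 0)"] by auto
    then show ?thesis by (simp add: F_pair)
  qed
  then show "surj A" by blast
qed

lemma inj_B: "inj B"
proof (rule injI)
  fix z w assume "B z = B w"
  then have "F (0, z) = F (0, w)" by (simp add: F_center)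
  then show "z = w" by (simp add: inj_eq[OF F_inj])
qed

lemma central_lie_decomposition:
  assumes A: "linear A" and B: "linear B"
  shows "\<exists>\<mu> Fb. central_aut \<rho> \<mu> \<and> lie_group_aut \<rho> Fb \<and> F = \<mu> \<circ> Fb"
proof (intro exI conjI)
  have "surj B" using linear_injective_imp_surjective[OF B inj_B] by simp
  then show "lie_group_aut \<rho> (map_prod A B)"
    using lie_group_aut_map_prod[OF A bij_A B] inj_B brk_A by (simp add: bij_def)
  have "Modules.additive (C \<circ> inv A)"
  proof
    fix u v
    have "A (inv A u + inv A v) = u + v"
      using bij_A by (simp add: additive.add[OF additive_A] bij_is_surj surj_f_inv_f)
    then have "inv A (u + v) = inv A u + inv A v" using bij_inv_eq_iff[OF bij_A] by metis
    then show "(C \<circ> inv A) (u + v) = (C \<circ> inv A) u + (C \<circ> inv A) v"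
      by (simp add: additive.add[OF additive_C])
  qed
  then show "central_aut \<rho> (\<lambda>(x, z). (x, z + (C \<circ> inv A) x))" by (rule central_aut_shear)
  show "F = (\<lambda>(x, z). (x, z + (C \<circ> inv A) x)) \<circ> map_prod A B"
    using bij_A by (auto simp: F_pair bij_is_inj add.commute)
qed

end

lemma group_aut_central_lie_decomposition:
  fixes \<rho> :: "'q::finite \<Rightarrow> 'q \<Rightarrow> 'p::finite \<Rightarrow> real"
  assumes \<rho>: "\<rho> \<in> Vo" "only_scalar_symmetric \<rho>" and q: "CARD('q) \<ge> 2" and F: "group_aut \<rho> F"
  shows "\<exists>\<mu> Fb. central_aut \<rho> \<mu> \<and> lie_group_aut \<rho> Fb \<and> F = \<mu> \<circ> Fb"
proof -
  have V: "\<rho> \<in> Vpq" and span: "span (range (\<lambda>(x, y). brk \<rho> x y)) = UNIV"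
    using \<rho>(1) by (auto simp: Vo_def)
  interpret nilpotent_aut \<rho> F
    using V ncenter_eq_fst_zero[OF V \<rho>(2) q] F by unfold_locales
  have "linear A"
    using additive_bracket_compatible_linear[OF \<rho>(2) _ additive_A bij_A brk_A]
      brk_nondegenerate[OF V \<rho>(2) q] by blast
  moreover have "linear B" using additive_bracket_image_linear[OF span \<open>linear A\<close> additive_B brk_A] .
  ultimately show ?thesis by (rule central_lie_decomposition)
qed

lemma group_field_aut_id:
  fixes \<rho> :: "'q::finite \<Rightarrow> 'q \<Rightarrow> 'p::finite \<Rightarrow> real"
  shows "group_field_aut \<rho> id"
  unfolding group_field_aut_def field_aut_alg_def
proof (intro exI[of _ "1::nat"] exI[of _ "\<lambda>_. UNIV"] exI[of _ "\<lambda>_. id"] conjI allI)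
  fix v :: "(real^'q) \<times> (real^'p)"
  show "\<exists>!us. (\<forall>i<(1::nat). us i \<in> UNIV) \<and> (\<forall>i\<ge>1. us i = 0) \<and> (\<Sum>i<1. us i) = v"
  proof (rule ex1I[of _ "\<lambda>i::nat. if i = 0 then v else 0"])
    fix us :: "nat \<Rightarrow> (real^'q) \<times> (real^'p)"
    assume "(\<forall>i<(1::nat). us i \<in> UNIV) \<and> (\<forall>i\<ge>1. us i = 0) \<and> (\<Sum>i<1. us i) = v"
    then show "us = (\<lambda>i. if i = 0 then v else 0)" by (auto simp: fun_eq_iff)
  qed simp
qed (simp_all add: lie_ideal_def subspace_UNIV)

section \<open>The polynomial defining the open set\<close>

(* Acting on flattened matrices t: row Some (a, b, k) is the k-th coordinate of
   [e_a, T e_b] - [T e_a, e_b] and row None is the trace, so the kernel consists of the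
   traceless rho-symmetric maps. *)
definition symmetry_matrix ::
    "('q::finite \<Rightarrow> 'q \<Rightarrow> 'p::finite \<Rightarrow> real) \<Rightarrow> real^('q \<times> 'q)^(('q \<times> 'q \<times> 'p) option)"
  where "symmetry_matrix \<rho> = (\<chi> r c. case r of
      None \<Rightarrow> (if fst c = snd c then 1 else 0)
    | Some (a, b, k) \<Rightarrow> (if snd c = b then \<rho> a (fst c) k else 0) - (if snd c = a then \<rho> (fst c) b k else 0))"

definition symmetry_gram_det :: "('q::finite \<Rightarrow> 'q \<Rightarrow> 'p::finite \<Rightarrow> real) \<Rightarrow> real"
  where "symmetry_gram_det \<rho> = det (transpose (symmetry_matrix \<rho>) ** symmetry_matrix \<rho>)"

lemma sum_UNIV_prod:
  fixes h :: "'a::finite \<times> 'b::finite \<Rightarrow> 'c::comm_monoid_add"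
  shows "(\<Sum>c\<in>UNIV. h c) = (\<Sum>i\<in>UNIV. \<Sum>j\<in>UNIV. h (i, j))"
  using sum.cartesian_product[of "\<lambda>i j. h (i, j)" UNIV UNIV] by simp

lemma symmetry_matrix_Some:
  "(symmetry_matrix \<rho> *v v) $ Some (a, b, k) =
     (\<Sum>j\<in>UNIV. v $ (j, b) * \<rho> a j k) - (\<Sum>i\<in>UNIV. v $ (i, a) * \<rho> i b k)"
  unfolding symmetry_matrix_def matrix_vector_mult_def sum_UNIV_prod
  by (simp add: right_diff_distrib sum_subtractf if_distrib[of "\<lambda>c. _ * c"] mult.commute cong: if_cong)

lemma symmetry_matrix_None: "(symmetry_matrix \<rho> *v v) $ None = (\<Sum>i\<in>UNIV. v $ (i, i))"
  unfolding symmetry_matrix_def matrix_vector_mult_def sum_UNIV_prod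
  by (simp add: if_distrib[of "\<lambda>c. c * _"] cong: if_cong)


lemma symmetry_matrix_kernel:
  "symmetry_matrix \<rho> *v v = 0 \<longleftrightarrow> rho_symmetric \<rho> (\<lambda>i j. v $ (i, j)) \<and> (\<Sum>i\<in>UNIV. v $ (i, i)) = 0"
proof -
  have all_option: "(\<forall>r. P r) \<longleftrightarrow> P None \<and> (\<forall>a b k. P (Some (a, b, k)))"
    for P :: "('q \<times> 'q \<times> 'p) option \<Rightarrow> bool"
  proof (intro iffI allI)
    fix r assume P: "P None \<and> (\<forall>a b k. P (Some (a, b, k)))"
    show "P r"
    proof (cases r)
      case (Some s)
      then show ?thesis using P by (cases s) auto
    qed (use P in simp)
  qed simp
  show ?thesis
    unfolding vec_eq_iff zero_index all_option[of "\<lambda>r. (symmetry_matrix \<rho> *v v) $ r = 0"]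
    by (simp add: rho_symmetric_def symmetry_matrix_Some symmetry_matrix_None conj_commute)
qed

lemma rho_symmetric_minus_scalar:
  "rho_symmetric \<rho> t \<Longrightarrow> rho_symmetric \<rho> (\<lambda>i j. t i j - (if i = j then c else 0))"
  unfolding rho_symmetric_def
  by (simp add: left_diff_distrib sum_subtractf if_distrib[of "\<lambda>x. x * _"] cong: if_cong)

lemma only_scalar_symmetric_iff_inj:
  fixes \<rho> :: "'q::finite \<Rightarrow> 'q \<Rightarrow> 'p::finite \<Rightarrow> real"
  shows "only_scalar_symmetric \<rho> \<longleftrightarrow> inj ((*v) (symmetry_matrix \<rho>))"
  unfolding linear_injective_0[OF matrix_vector_mul_linear]
proof (intro iffI allI impI)
  fix v assume \<rho>: "only_scalar_symmetric \<rho>" and "symmetry_matrix \<rho> *v v = 0"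
  then have "rho_symmetric \<rho> (\<lambda>i j. v $ (i, j))" and trace: "(\<Sum>i\<in>UNIV. v $ (i, i)) = 0"
    by (simp_all add: symmetry_matrix_kernel)
  then obtain c where c: "\<And>i j. v $ (i, j) = (if i = j then c else 0)"
    using \<rho> unfolding only_scalar_symmetric_def by blast
  then have "c = 0" using trace by simp
  then show "v = 0" using c by (simp add: vec_eq_iff)
next
  assume inj: "\<forall>v. symmetry_matrix \<rho> *v v = 0 \<longrightarrow> v = 0"
  show "only_scalar_symmetric \<rho>" unfolding only_scalar_symmetric_def
  proof (intro allI impI)
    fix t assume t: "rho_symmetric \<rho> t"
    \<comment> \<open>subtracting the scalar with the same trace leaves a traceless symmetric map\<close>
    define c where "c = (\<Sum>i\<in>UNIV. t i i) / CARD('q)"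
    define v :: "real^('q \<times> 'q)" where "v = (\<chi> p. t (fst p) (snd p) - (if fst p = snd p then c else 0))"
    have "symmetry_matrix \<rho> *v v = 0"
      using rho_symmetric_minus_scalar[OF t, of c]
      by (simp add: symmetry_matrix_kernel v_def sum_subtractf c_def)
    then have "v = 0" using inj by blast
    then have "v $ (i, j) = 0" for i j by simp
    then have "t i j = (if i = j then c else 0)" for i j by (simp add: v_def)
    then show "\<exists>c. \<forall>i j. t i j = (if i = j then c else 0)" by blast
  qed
qed

lemma det_gram_nonzero_iff_inj:
  fixes N :: "real^'n::finite^'m::finite"
  shows "det (transpose N ** N) \<noteq> 0 \<longleftrightarrow> inj ((*v) N)"
proof -
  have "transpose N ** N *v v = 0 \<longleftrightarrow> N *v v = 0" for v
  proof
    assume "transpose N ** N *v v = 0"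
    then have "(N *v v) \<bullet> (N *v v) = 0"
      by (metis dot_lmul_matrix inner_zero_right matrix_vector_mul_assoc vector_transpose_matrix)
    then show "N *v v = 0" by simp
  qed (simp add: matrix_vector_mul_assoc[symmetric])
  then show ?thesis
    using det_nz_iff_inj[OF matrix_vector_mul_linear[of "transpose N ** N"]]
    by (simp add: linear_injective_0[OF matrix_vector_mul_linear])
qed

lemma symmetry_gram_det_nonzero_iff: "symmetry_gram_det \<rho> \<noteq> 0 \<longleftrightarrow> only_scalar_symmetric \<rho>"
  by (simp add: symmetry_gram_det_def det_gram_nonzero_iff_inj only_scalar_symmetric_iff_inj)

lemma V_poly_symmetry_gram_det: "V_poly symmetry_gram_det"
proof -
  have "poly_in V_coords (\<lambda>\<rho>. symmetry_matrix \<rho> $ r $ c)" for r c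
    by (cases r) (auto simp: symmetry_matrix_def poly_in.const V_poly_coord[unfolded V_poly_def]
        intro!: poly_in_diff poly_in_if)
  then show ?thesis unfolding V_poly_def symmetry_gram_det_def
    by (intro poly_in_det poly_in_matrix_mult) (simp_all add: transpose_def)
qed


lemma sum_if_eq_conj:
  fixes f :: "'a::finite \<Rightarrow> 'b::comm_monoid_add"
  shows "(\<Sum>j\<in>UNIV. if j = m \<and> P then f j else 0) = (if P then f m else 0)"
    and "(\<Sum>j\<in>UNIV. if P \<and> j = m then f j else 0) = (if P then f m else 0)"
  by (cases P; simp)+

(* The only nonzero brackets of basis vectors are [e_i0, e_m] = f_(g m) for m \<noteq> i0; a symmetric
   map must then preserve every line R e_m and act on all of them by the same scalar. *)
lemma only_scalar_symmetric_example:
  fixes i0 :: "'q::finite" and g :: "'q \<Rightarrow> 'p::finite"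
  assumes g: "inj_on g (- {i0})"
  defines "\<rho> \<equiv> \<lambda>i j k. (if i = i0 \<and> j \<noteq> i0 \<and> g j = k then 1 else 0)
                     - (if j = i0 \<and> i \<noteq> i0 \<and> g i = k then (1::real) else 0)"
  shows "\<rho> \<in> Vpq" and "only_scalar_symmetric \<rho>"
proof -
  show "\<rho> \<in> Vpq" unfolding Vpq_def \<rho>_def by auto
  have \<rho>_g: "\<rho> i j (g m) = (if i = i0 \<and> j = m then 1 else 0) - (if j = i0 \<and> i = m then 1 else 0)"
    if "m \<noteq> i0" for i j m
  proof -
    have "(j \<noteq> i0 \<and> g j = g m) \<longleftrightarrow> j = m" for j
      using g that by (auto dest: inj_onD)
    then show ?thesis unfolding \<rho>_def by auto
  qed
  show "only_scalar_symmetric \<rho>" unfolding only_scalar_symmetric_def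
  proof (intro allI impI)
    fix t assume t: "rho_symmetric \<rho> t"
    have eq: "(if a = i0 then t m b else 0) - (if a = m then t i0 b else 0)
            = (if b = m then t i0 a else 0) - (if b = i0 then t m a else 0)" if "m \<noteq> i0" for a b m
      using t[unfolded rho_symmetric_def, rule_format, of a b "g m"]
      by (simp add: \<rho>_g[OF that] right_diff_distrib sum_subtractf if_distrib[of "\<lambda>c. _ * c"]
          sum_if_eq_conj cong: if_cong)
    have "t m i0 = 0" "t i0 m = 0" if "m \<noteq> i0" for m
      using eq[OF that, of i0 i0] eq[OF that, of m m] that by simp_all
    moreover have "t m b = (if b = m then t i0 i0 else 0)" if "m \<noteq> i0" "b \<noteq> i0" for m b
      using eq[OF that(1), of i0 b] that by (auto split: if_splits)
    ultimately show "\<exists>c. \<forall>i j. t i j = (if i = j then c else 0)"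
      by (metis (full_types))
  qed
qed

lemma exists_only_scalar_symmetric:
  assumes "CARD('q::finite) - 1 \<le> CARD('p::finite)"
  shows "\<exists>\<rho> :: 'q \<Rightarrow> 'q \<Rightarrow> 'p \<Rightarrow> real. \<rho> \<in> Vpq \<and> only_scalar_symmetric \<rho>"
proof -
  fix i0 :: 'q
  have "card (- {i0}) \<le> CARD('p)" using assms by (simp add: Compl_eq_Diff_UNIV card_Diff_singleton)
  then obtain g :: "'q \<Rightarrow> 'p" where "inj_on g (- {i0})"
    using card_le_inj[of "- {i0}" "UNIV :: 'p set"] by auto
  then show ?thesis using only_scalar_symmetric_example by blast
qed


theorem theorem3p3:
  assumes "CARD('p::finite) \<ge> 1" and "CARD('q::finite) \<ge> 2"
    and "CARD('q) - 1 \<le> CARD('p)"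
    and "2 * CARD('p) \<le> CARD('q) * (CARD('q) - 1)"
  shows "\<exists>Ob :: ('q \<Rightarrow> 'q \<Rightarrow> 'p \<Rightarrow> real) set.
           zariski_open_V Ob \<and> zariski_dense_V Ob
         \<and> (\<forall>\<rho>\<in>Ob \<inter> Vo. partial_automatic_continuity \<rho>)
         \<and> (\<forall>\<rho>\<in>Ob \<inter> Vo. \<forall>F. group_aut \<rho> F \<longrightarrow>
              (\<exists>\<mu> Fb. central_aut \<rho> \<mu> \<and> lie_group_aut \<rho> Fb \<and> F = \<mu> \<circ> Fb))"
proof -
  define Ob :: "('q \<Rightarrow> 'q \<Rightarrow> 'p \<Rightarrow> real) set" where "Ob = {\<rho> \<in> Vpq. symmetry_gram_det \<rho> \<noteq> 0}"
  obtain \<rho>0 :: "'q \<Rightarrow> 'q \<Rightarrow> 'p \<Rightarrow> real" where "\<rho>0 \<in> Vpq" "symmetry_gram_det \<rho>0 \<noteq> 0"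
    using exists_only_scalar_symmetric[OF assms(3)] symmetry_gram_det_nonzero_iff by blast
  have decomposition: "\<exists>\<mu> Fb. central_aut \<rho> \<mu> \<and> lie_group_aut \<rho> Fb \<and> F = \<mu> \<circ> Fb"
    if "\<rho> \<in> Ob \<inter> Vo" and "group_aut \<rho> F" for \<rho> F
  proof -
    have "\<rho> \<in> Vo" "only_scalar_symmetric \<rho>"
      using that(1) by (simp_all add: Ob_def symmetry_gram_det_nonzero_iff)
    then show ?thesis using group_aut_central_lie_decomposition assms(2) that(2) by blast
  qed
  have "partial_automatic_continuity \<rho>" if "\<rho> \<in> Ob \<inter> Vo" for \<rho>
    unfolding partial_automatic_continuity_def
    using decomposition[OF that] group_field_aut_id by (metis comp_id)
  moreover have "zariski_open_V Ob" "zariski_dense_V Ob"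
    unfolding Ob_def using V_poly_symmetry_gram_det zariski_open_V_nonvanishing
      zariski_dense_V_nonvanishing \<open>\<rho>0 \<in> Vpq\<close> \<open>symmetry_gram_det \<rho>0 \<noteq> 0\<close> by blast+
  ultimately show ?thesis using decomposition by blast
qed

end
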